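(* $\widetilde{\mathbb{K}}_{sm}$ is not an exchange ring, i.e., there exists $r\in\widetilde{\mathbb{K}}_{sm}$ such that $r+e$ is not invertible for every idempotent $e\in\widetilde{\mathbb{K}}_{sm}$.
   Context: Let $I=(0,1]$ and $\mathbb{K}\in\{\mathbb{R},\mathbb{C}\}$. $\mathcal{E}_{M,sm}$ is the set of nets $(r_\varepsilon)_{\varepsilon\in I}\in\mathbb{K}^I$ with $\varepsilon\mapsto r_\varepsilon$ smooth on $I$ and $|r_\varepsilon|=O(\varepsilon^{-N})$ as $\varepsilon\to0$ for some $N\in\mathbb{N}$; $\mathcal{N}_{sm}$ is the set of smooth nets with $|r_\varepsilon|=O(\varepsilon^m)$ for all $m\in\mathbb{N}$; $\widetilde{\mathbb{K}}_{sm}=\mathcal{E}_{M,sm}/\mathcal{N}_{sm}$. A commutative ring $R$ with $1$ is an exchange ring if for each $r\in R$ there is an idempotent $e\in R$ with $r+e$ invertible. *)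

theory Defs
  imports "HOL-Analysis.Analysis"
begin

text \<open>The index set I = (0,1]. Nets are represented as functions real => 'a;
  only their values on I matter.\<close>

definition Iset :: "real set" where "Iset = {0<..1}"

definition smooth_net :: "(real \<Rightarrow> 'a::real_normed_vector) \<Rightarrow> bool" where
  "smooth_net r \<longleftrightarrow> (\<exists>D :: nat \<Rightarrow> real \<Rightarrow> 'a.
      (\<forall>t\<in>Iset. D 0 t = r t) \<and>
      (\<forall>k. \<forall>t\<in>Iset. (D k has_vector_derivative D (Suc k) t) (at t within Iset)))"

definition EM_sm :: "(real \<Rightarrow> 'a::real_normed_vector) set" where
  "EM_sm = {r. smooth_net r \<and>
     (\<exists>N::nat. \<exists>C::real. \<forall>\<^sub>F \<epsilon> in at_right 0. norm (r \<epsilon>) \<le> C * inverse (\<epsilon> ^ N))}"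

definition N_sm :: "(real \<Rightarrow> 'a::real_normed_vector) set" where
  "N_sm = {r. smooth_net r \<and>
     (\<forall>m::nat. \<exists>C::real. \<forall>\<^sub>F \<epsilon> in at_right 0. norm (r \<epsilon>) \<le> C * \<epsilon> ^ m)}"

text \<open>Working with representatives in EM_sm of classes of the quotient ring
  K~_sm = EM_sm / N_sm (ring operations are pointwise).\<close>

definition idempotent_sm :: "(real \<Rightarrow> 'a::real_normed_field) \<Rightarrow> bool" where
  "idempotent_sm e \<longleftrightarrow> e \<in> EM_sm \<and> (\<lambda>\<epsilon>. e \<epsilon> * e \<epsilon> - e \<epsilon>) \<in> N_sm"

definition invertible_sm :: "(real \<Rightarrow> 'a::real_normed_field) \<Rightarrow> bool" where
  "invertible_sm u \<longleftrightarrow> u \<in> EM_sm \<and> (\<exists>s\<in>EM_sm. (\<lambda>\<epsilon>. u \<epsilon> * s \<epsilon> - 1) \<in> N_sm)"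

end

theory Submission
  imports Defs "HOL-Complex_Analysis.Complex_Analysis"
begin

text \<open>
  If \<open>e\<close> is idempotent, \<open>e\<^sup>2 - e = e (e - 1)\<close> is negligible, so near 0 the continuous function
  \<open>|e|\<close> never takes the value 1/2; on the connected set \<open>(0, b)\<close> it therefore stays on one side
  of 1/2, and then \<open>e\<close> or \<open>e - 1\<close> is dominated by \<open>2 |e (e - 1)|\<close>. Hence the only idempotents
  are 0 and 1. An invertible \<open>u\<close> (with \<open>u s - 1\<close> negligible, \<open>s\<close> moderate) cannot coincide
  with a negligible net at points accumulating at 0, since there \<open>u s\<close> would be both close
  to 1 and close to 0. The net \<open>r = -(1 + sin (1/\<epsilon>))/2\<close> takes both values 0 and -1 at points
  accumulating at 0, where \<open>r + e\<close> agrees with the negligible net \<open>e\<close> resp. \<open>e - 1\<close>.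
\<close>

lemma smooth_net_continuous_on:
  assumes "smooth_net (r :: real \<Rightarrow> 'a::real_normed_vector)"
  shows "continuous_on Iset r"
proof -
  obtain D where D0: "\<forall>t\<in>Iset. D 0 t = r t"
    and DD: "\<forall>k. \<forall>t\<in>Iset. (D k has_vector_derivative D (Suc k) t) (at t within Iset)"
    using assms unfolding smooth_net_def by blast
  have "continuous_on Iset (D 0)"
    using DD by (intro continuous_on_vector_derivative) blast
  then show ?thesis using D0 continuous_on_cong by fastforce
qed

lemma smooth_net_diff_const:
  assumes "smooth_net (r :: real \<Rightarrow> 'a::real_normed_vector)"
  shows "smooth_net (\<lambda>t. r t - c)"
proof -
  obtain D where D0: "\<forall>t\<in>Iset. D 0 t = r t"
    and DD: "\<forall>k. \<forall>t\<in>Iset. (D k has_vector_derivative D (Suc k) t) (at t within Iset)"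
    using assms unfolding smooth_net_def by blast
  define D' where "D' = (\<lambda>k t. if k = 0 then D 0 t - c else D k t)"
  have "(D' k has_vector_derivative D' (Suc k) t) (at t within Iset)" if "t \<in> Iset" for k t
  proof (cases k)
    case 0
    then show ?thesis
      using has_vector_derivative_diff[OF DD[rule_format, OF that] has_vector_derivative_const]
      by (simp add: D'_def)
  qed (use DD that in \<open>simp add: D'_def\<close>)
  moreover have "\<forall>t\<in>Iset. D' 0 t = r t - c" using D0 by (simp add: D'_def)
  ultimately show ?thesis unfolding smooth_net_def by blast
qed

lemma smooth_net_Re:
  assumes "smooth_net (r :: real \<Rightarrow> complex)"
  shows "smooth_net (\<lambda>t. Re (r t))"
proof -
  obtain D where D0: "\<forall>t\<in>Iset. D 0 t = r t"
    and DD: "\<forall>k. \<forall>t\<in>Iset. (D k has_vector_derivative D (Suc k) t) (at t within Iset)"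
    using assms unfolding smooth_net_def by blast
  have "((\<lambda>x. Re (D k x)) has_vector_derivative Re (D (Suc k) t)) (at t within Iset)"
    if "t \<in> Iset" for k t
    using has_field_derivative_Re[OF DD[rule_format, OF that]]
    by (simp add: has_real_derivative_iff_has_vector_derivative)
  with D0 show ?thesis
    unfolding smooth_net_def by (intro exI[of _ "\<lambda>k t. Re (D k t)"]) simp
qed

lemma smooth_net_holomorphic:
  assumes "f holomorphic_on S" "open S" "complex_of_real ` Iset \<subseteq> S"
  shows "smooth_net (\<lambda>t. f (complex_of_real t))"
proof -
  have "((\<lambda>x. (deriv ^^ k) f (complex_of_real x)) has_vector_derivative
          (deriv ^^ Suc k) f (complex_of_real t)) (at t within Iset)" if "t \<in> Iset" for k t
  proof -
    have "((deriv ^^ k) f has_field_derivative (deriv ^^ Suc k) f (complex_of_real t))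
            (at (complex_of_real t))"
      using holomorphic_derivI[OF holomorphic_higher_deriv[OF assms(1,2)] assms(2)] that assms(3)
      by auto
    then show ?thesis by (rule has_vector_derivative_real_field)
  qed
  then show ?thesis
    unfolding smooth_net_def
    by (intro exI[of _ "\<lambda>k x. (deriv ^^ k) f (complex_of_real x)"]) simp
qed

lemma bounded_smooth_net_in_EM_sm:
  assumes "smooth_net r" "\<And>t. norm (r t) \<le> C"
  shows "r \<in> EM_sm"
  unfolding EM_sm_def using assms
  by (auto intro!: exI[of _ 0] exI[of _ C] always_eventually)

lemma N_sm_tendsto_zero:
  assumes "r \<in> N_sm"
  shows "(r \<longlongrightarrow> 0) (at_right 0)"
proof -
  obtain C where "\<forall>\<^sub>F \<epsilon> in at_right 0. norm (r \<epsilon>) \<le> C * \<epsilon> ^ 1"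
    using assms unfolding N_sm_def by blast
  then have "\<forall>\<^sub>F \<epsilon> in at_right 0. norm (r \<epsilon>) \<le> C * \<epsilon>" by simp
  moreover have "((\<lambda>\<epsilon>. C * \<epsilon>) \<longlongrightarrow> 0) (at_right (0::real))"
    by (intro tendsto_mult_right_zero tendsto_ident_at)
  ultimately show ?thesis by (rule Lim_null_comparison)
qed

lemma N_sm_times_EM_sm_tendsto_zero:
  fixes w s :: "real \<Rightarrow> 'a::real_normed_field"
  assumes "w \<in> N_sm" "s \<in> EM_sm"
  shows "((\<lambda>\<epsilon>. w \<epsilon> * s \<epsilon>) \<longlongrightarrow> 0) (at_right 0)"
proof -
  obtain N Cs where s: "\<forall>\<^sub>F \<epsilon> in at_right 0. norm (s \<epsilon>) \<le> Cs * inverse (\<epsilon> ^ N)"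
    using assms(2) unfolding EM_sm_def by blast
  obtain Cw where w: "\<forall>\<^sub>F \<epsilon> in at_right 0. norm (w \<epsilon>) \<le> Cw * \<epsilon> ^ Suc N"
    using assms(1) unfolding N_sm_def by blast
  have "\<forall>\<^sub>F \<epsilon> in at_right 0. norm (w \<epsilon> * s \<epsilon>) \<le> Cw * Cs * \<epsilon>"
    using s w eventually_at_right_less[of 0]
  proof eventually_elim
    case (elim \<epsilon>)
    have "norm (w \<epsilon> * s \<epsilon>) \<le> (Cw * \<epsilon> ^ Suc N) * (Cs * inverse (\<epsilon> ^ N))"
      unfolding norm_mult using elim by (intro mult_mono) (auto intro: order_trans[OF norm_ge_zero])
    also have "\<dots> = Cw * Cs * \<epsilon>" using elim by (simp add: field_simps)
    finally show ?case .
  qed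
  moreover have "((\<lambda>\<epsilon>. Cw * Cs * \<epsilon>) \<longlongrightarrow> 0) (at_right (0::real))"
    by (intro tendsto_mult_right_zero tendsto_ident_at)
  ultimately show ?thesis by (rule Lim_null_comparison)
qed

lemma N_sm_if_dominated:
  assumes "smooth_net r" "g \<in> N_sm"
    and "\<forall>\<^sub>F \<epsilon> in at_right 0. norm (r \<epsilon>) \<le> c * norm (g \<epsilon>)" "c \<ge> 0"
  shows "r \<in> N_sm"
  unfolding N_sm_def
proof (intro CollectI conjI allI assms(1))
  fix m
  obtain C where "\<forall>\<^sub>F \<epsilon> in at_right 0. norm (g \<epsilon>) \<le> C * \<epsilon> ^ m"
    using assms(2) unfolding N_sm_def by blast
  with assms(3) have "\<forall>\<^sub>F \<epsilon> in at_right 0. norm (r \<epsilon>) \<le> (c * C) * \<epsilon> ^ m"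
    by eventually_elim (use assms(4) in \<open>metis mult.assoc mult_left_mono order_trans\<close>)
  then show "\<exists>C. \<forall>\<^sub>F \<epsilon> in at_right 0. norm (r \<epsilon>) \<le> C * \<epsilon> ^ m" by blast
qed

lemma continuous_on_connected_avoiding:
  fixes f :: "'a::topological_space \<Rightarrow> real"
  assumes "connected S" "continuous_on S f" "\<forall>x\<in>S. f x \<noteq> c"
  shows "(\<forall>x\<in>S. f x < c) \<or> (\<forall>x\<in>S. f x > c)"
proof (rule ccontr)
  assume "\<not> ?thesis"
  then obtain x y where "x \<in> S" "y \<in> S" "f x < c" "f y > c"
    using assms(3) by (meson linorder_neqE_linordered_idom)
  moreover have "connected (f ` S)"
    using assms(2,1) by (rule connected_continuous_image)
  ultimately have "c \<in> f ` S"
    unfolding connected_iff_interval by (meson imageI less_imp_le)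
  with assms(3) show False by blast
qed

lemma norm_le_idempotent_defect:
  fixes x :: "'a::real_normed_field"
  assumes "norm x \<le> 1/2"
  shows "norm x \<le> 2 * norm (x * x - x)"
proof -
  have "1/2 \<le> norm (x - 1)"
    using assms norm_triangle_ineq2[of 1 x] by (simp add: norm_minus_commute)
  then have "norm x * (1/2) \<le> norm x * norm (x - 1)" by (rule mult_left_mono) simp
  then show ?thesis by (simp add: norm_mult[symmetric] algebra_simps)
qed

lemma norm_diff_one_le_idempotent_defect:
  fixes x :: "'a::real_normed_field"
  assumes "norm x \<ge> 1/2"
  shows "norm (x - 1) \<le> 2 * norm (x * x - x)"
proof -
  have "1/2 * norm (x - 1) \<le> norm x * norm (x - 1)" using assms by (rule mult_right_mono) simp
  then show ?thesis by (simp add: norm_mult[symmetric] algebra_simps)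
qed

lemma idempotent_sm_cases:
  fixes e :: "real \<Rightarrow> 'a::real_normed_field"
  assumes "idempotent_sm e"
  shows "e \<in> N_sm \<or> (\<lambda>\<epsilon>. e \<epsilon> - 1) \<in> N_sm"
proof -
  have e: "smooth_net e" and n: "(\<lambda>\<epsilon>. e \<epsilon> * e \<epsilon> - e \<epsilon>) \<in> N_sm"
    using assms unfolding idempotent_sm_def EM_sm_def by auto
  have "\<forall>\<^sub>F \<epsilon> in at_right 0. norm (e \<epsilon> * e \<epsilon> - e \<epsilon>) < 1/4 \<and> \<epsilon> < 1"
    using order_tendstoD(2)[OF tendsto_norm_zero[OF N_sm_tendsto_zero[OF n]], of "1/4"]
      eventually_at_right_field[of "\<lambda>\<epsilon>. \<epsilon> < 1" 0]
    by (auto elim: eventually_elim2 intro: exI[of _ 1])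
  then obtain b where "b > 0"
    and b: "\<And>\<epsilon>. 0 < \<epsilon> \<Longrightarrow> \<epsilon> < b \<Longrightarrow> norm (e \<epsilon> * e \<epsilon> - e \<epsilon>) < 1/4 \<and> \<epsilon> < 1"
    unfolding eventually_at_right_field by auto
  have near_zero: "\<forall>\<^sub>F \<epsilon> in at_right 0. \<epsilon> \<in> {0<..<b}"
    using \<open>b > 0\<close> unfolding eventually_at_right_field by auto
  have "norm (e \<epsilon>) \<noteq> 1/2" if "\<epsilon> \<in> {0<..<b}" for \<epsilon>
    using norm_le_idempotent_defect[of "e \<epsilon>"] b that by force
  moreover have "continuous_on {0<..<b} (\<lambda>\<epsilon>. norm (e \<epsilon>))"
    using b by (intro continuous_on_norm continuous_on_subset[OF smooth_net_continuous_on[OF e]])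
      (force simp: Iset_def)
  ultimately consider "\<forall>\<epsilon>\<in>{0<..<b}. norm (e \<epsilon>) < 1/2" | "\<forall>\<epsilon>\<in>{0<..<b}. norm (e \<epsilon>) > 1/2"
    using continuous_on_connected_avoiding[of "{0<..<b}" "\<lambda>\<epsilon>. norm (e \<epsilon>)" "1/2"] by auto
  then show ?thesis
  proof cases
    case 1
    then have "\<forall>\<^sub>F \<epsilon> in at_right 0. norm (e \<epsilon>) \<le> 2 * norm (e \<epsilon> * e \<epsilon> - e \<epsilon>)"
      using norm_le_idempotent_defect by (force intro: eventually_mono[OF near_zero])
    then have "e \<in> N_sm" by (rule N_sm_if_dominated[OF e n]) simp
    then show ?thesis ..
  next
    case 2
    then have "\<forall>\<^sub>F \<epsilon> in at_right 0. norm (e \<epsilon> - 1) \<le> 2 * norm (e \<epsilon> * e \<epsilon> - e \<epsilon>)"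
      using norm_diff_one_le_idempotent_defect by (force intro: eventually_mono[OF near_zero])
    then have "(\<lambda>\<epsilon>. e \<epsilon> - 1) \<in> N_sm"
      by (rule N_sm_if_dominated[OF smooth_net_diff_const[OF e] n]) simp
    then show ?thesis ..
  qed
qed

lemma not_invertible_sm_if_frequently_eq_N_sm:
  fixes u w :: "real \<Rightarrow> 'a::real_normed_field"
  assumes "w \<in> N_sm" "\<exists>\<^sub>F \<epsilon> in at_right 0. u \<epsilon> = w \<epsilon>"
  shows "\<not> invertible_sm u"
proof
  assume "invertible_sm u"
  then obtain s where "s \<in> EM_sm" and "(\<lambda>\<epsilon>. u \<epsilon> * s \<epsilon> - 1) \<in> N_sm"
    unfolding invertible_sm_def by blast
  have "\<forall>\<^sub>F \<epsilon> in at_right 0. norm (u \<epsilon> * s \<epsilon> - 1) < 1/2"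
    using tendsto_norm_zero[OF N_sm_tendsto_zero[OF \<open>(\<lambda>\<epsilon>. u \<epsilon> * s \<epsilon> - 1) \<in> N_sm\<close>]]
    by (rule order_tendstoD(2)) simp
  moreover have "\<forall>\<^sub>F \<epsilon> in at_right 0. norm (w \<epsilon> * s \<epsilon>) < 1/2"
    using tendsto_norm_zero[OF N_sm_times_EM_sm_tendsto_zero[OF assms(1) \<open>s \<in> EM_sm\<close>]]
    by (rule order_tendstoD(2)) simp
  ultimately have "\<forall>\<^sub>F \<epsilon> in at_right 0. u \<epsilon> \<noteq> w \<epsilon>"
  proof eventually_elim
    case (elim \<epsilon>)
    have "1 \<le> norm (u \<epsilon> * s \<epsilon>) + norm (u \<epsilon> * s \<epsilon> - 1)"
      using norm_triangle_ineq2[of 1 "u \<epsilon> * s \<epsilon>"] by (simp add: norm_minus_commute)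
    with elim show ?case by auto
  qed
  with assms(2) show False by (simp add: frequently_def)
qed

lemma not_invertible_sm_add_idempotent:
  fixes r e :: "real \<Rightarrow> 'a::real_normed_field"
  assumes "\<exists>\<^sub>F \<epsilon> in at_right 0. r \<epsilon> = 0" "\<exists>\<^sub>F \<epsilon> in at_right 0. r \<epsilon> = -1"
    and "idempotent_sm e"
  shows "\<not> invertible_sm (\<lambda>\<epsilon>. r \<epsilon> + e \<epsilon>)"
  using idempotent_sm_cases[OF assms(3)]
proof
  assume "e \<in> N_sm"
  moreover have "\<exists>\<^sub>F \<epsilon> in at_right 0. r \<epsilon> + e \<epsilon> = e \<epsilon>"
    using assms(1) by (rule frequently_elim1) simp
  ultimately show ?thesis by (rule not_invertible_sm_if_frequently_eq_N_sm)
next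
  assume "(\<lambda>\<epsilon>. e \<epsilon> - 1) \<in> N_sm"
  moreover have "\<exists>\<^sub>F \<epsilon> in at_right 0. r \<epsilon> + e \<epsilon> = e \<epsilon> - 1"
    using assms(2) by (rule frequently_elim1) simp
  ultimately show ?thesis by (rule not_invertible_sm_if_frequently_eq_N_sm)
qed

lemma frequently_sin_inverse_eq:
  fixes \<theta> :: real
  assumes "\<theta> > 0"
  shows "\<exists>\<^sub>F \<epsilon> in at_right 0. sin (1 / \<epsilon>) = sin \<theta>"
  unfolding frequently_def eventually_at_right_field
proof clarsimp
  fix \<delta> :: real assume "\<delta> > 0"
  obtain k :: nat where k: "inverse \<delta> < real k" using reals_Archimedean2 by blast
  define x where "x = 2 * real k * pi + \<theta>"
  have "real k \<le> 2 * real k * pi"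
    using mult_left_mono[of 1 "2 * pi" "real k"] pi_ge_two by (simp add: algebra_simps)
  then have "inverse \<delta> < x" unfolding x_def using k assms by linarith
  moreover have "0 < inverse \<delta>" using \<open>\<delta> > 0\<close> by simp
  ultimately have "0 < x" by linarith
  with \<open>inverse \<delta> < x\<close> \<open>0 < inverse \<delta>\<close> have "0 < 1 / x" "1 / x < \<delta>"
    using less_imp_inverse_less[of "inverse \<delta>" x] by (simp_all add: inverse_eq_divide)
  moreover have "sin (1 / (1 / x)) = sin \<theta>" unfolding x_def by (simp add: sin_add)
  ultimately show "\<exists>\<epsilon>>0. \<epsilon> < \<delta> \<and> sin (1 / \<epsilon>) = sin \<theta>" by blast
qed

lemma smooth_net_sin_inverse:
  "smooth_net (\<lambda>t. complex_of_real (- (1 + sin (1 / t)) / 2))"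
proof -
  have "smooth_net (\<lambda>t. - (1 + sin (1 / complex_of_real t)) / 2)"
    by (rule smooth_net_holomorphic[where S = "{z. 0 < Re z}"])
      (auto simp: Iset_def open_halfspace_Re_gt intro!: holomorphic_intros)
  moreover have "- (1 + sin (1 / complex_of_real t)) / 2 = complex_of_real (- (1 + sin (1 / t)) / 2)"
    for t
    by (simp add: sin_of_real[symmetric])
  ultimately show ?thesis by (simp only:)
qed

lemma smooth_net_sin_inverse_real:
  "smooth_net (\<lambda>t. - (1 + sin (1 / t)) / 2 :: real)"
  using smooth_net_Re[OF smooth_net_sin_inverse] by simp

theorem lemma4p3:
  shows "(\<exists>r::real \<Rightarrow> real. r \<in> EM_sm \<and>
            (\<forall>e. idempotent_sm e \<longrightarrow> \<not> invertible_sm (\<lambda>\<epsilon>. r \<epsilon> + e \<epsilon>)))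
       \<and> (\<exists>r::real \<Rightarrow> complex. r \<in> EM_sm \<and>
            (\<forall>e. idempotent_sm e \<longrightarrow> \<not> invertible_sm (\<lambda>\<epsilon>. r \<epsilon> + e \<epsilon>)))"
proof -
  define r :: "real \<Rightarrow> real" where "r = (\<lambda>t. - (1 + sin (1 / t)) / 2)"
  have norm_r: "norm (r t) \<le> 1" for t
    using sin_ge_minus_one[of "1/t"] sin_le_one[of "1/t"] by (auto simp: r_def)
  then have norm_of_real_r: "norm (complex_of_real (r t)) \<le> 1" for t
    by (simp only: norm_of_real real_norm_def)
  have r0: "\<exists>\<^sub>F \<epsilon> in at_right 0. r \<epsilon> = 0"
    using frequently_sin_inverse_eq[of "3/2 * pi", unfolded sin_3over2_pi]
    by (auto simp: r_def elim: frequently_elim1)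
  have r1: "\<exists>\<^sub>F \<epsilon> in at_right 0. r \<epsilon> = -1"
    using frequently_sin_inverse_eq[of "pi/2"] by (auto simp: r_def elim: frequently_elim1)
  have "r \<in> EM_sm"
    using smooth_net_sin_inverse_real norm_r unfolding r_def by (rule bounded_smooth_net_in_EM_sm)
  moreover have "(\<lambda>t. complex_of_real (r t)) \<in> EM_sm"
    using smooth_net_sin_inverse norm_of_real_r unfolding r_def by (rule bounded_smooth_net_in_EM_sm)
  moreover have "\<forall>e. idempotent_sm e \<longrightarrow> \<not> invertible_sm (\<lambda>\<epsilon>. r \<epsilon> + e \<epsilon>)"
    using not_invertible_sm_add_idempotent[OF r0 r1] by blast
  moreover have "\<exists>\<^sub>F \<epsilon> in at_right 0. complex_of_real (r \<epsilon>) = 0"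
    using r0 by (rule frequently_elim1) simp
  moreover have "\<exists>\<^sub>F \<epsilon> in at_right 0. complex_of_real (r \<epsilon>) = -1"
    using r1 by (rule frequently_elim1) simp
  ultimately show ?thesis
    using not_invertible_sm_add_idempotent[of "\<lambda>\<epsilon>. complex_of_real (r \<epsilon>)"] by blast
qed

end
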